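(* Let $1<\alpha<2$. If $\xi\in E_\alpha\setminus K_3$, then $\partial_y^3w(\xi)\neq0$. Moreover, $\partial_y^3w(P)=0$ for all $P\in K_3$.
   Context: $\mathbb{T}^2=[-\pi,\pi]^2$, $M=\mathbb{T}^2\setminus\{0\}$, $w(\xi)=\left(\sin^2(\frac{\xi_1}{2})+\sin^2(\frac{\xi_2}{2})\right)^{\frac{\alpha}{2}}$ (real analytic on $M$). $K_3=\{(\pm\frac\pi2,\pm\frac\pi2)\}$. $E_\alpha=\{\xi\in M:\det D^2w(\xi)=0\}$; at such points $D^2w(\xi)$ has rank one. For $\xi\in E_\alpha$, let $k_2(\xi)$ be a unit vector spanning the kernel of $D^2w(\xi)$ and $\partial_y=k_2(\xi)\cdot\nabla$ denote the directional derivative in that direction (so $\partial_y^3w(\xi)=\sum_{i,j,l}k_{2,i}k_{2,j}k_{2,l}\partial_{ijl}w(\xi)$). *)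

theory Defs
  imports "HOL-Analysis.Analysis"
begin

definition coord_dir :: "nat \<Rightarrow> real \<times> real" where
  "coord_dir i = (if i = 1 then (1, 0) else (0, 1))"

definition comp :: "real \<times> real \<Rightarrow> nat \<Rightarrow> real" where
  "comp v i = (if i = 1 then fst v else snd v)"

definition partial :: "nat \<Rightarrow> (real \<times> real \<Rightarrow> real) \<Rightarrow> real \<times> real \<Rightarrow> real" where
  "partial i f x = deriv (\<lambda>t. f (x + t *\<^sub>R coord_dir i)) 0"

definition w :: "real \<Rightarrow> real \<times> real \<Rightarrow> real" where
  "w \<alpha> \<xi> = ((sin (fst \<xi> / 2))\<^sup>2 + (sin (snd \<xi> / 2))\<^sup>2) powr (\<alpha> / 2)"

definition hess :: "real \<Rightarrow> real \<times> real \<Rightarrow> nat \<Rightarrow> nat \<Rightarrow> real" where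
  "hess \<alpha> \<xi> i j = partial i (partial j (w \<alpha>)) \<xi>"

definition det_hess :: "real \<Rightarrow> real \<times> real \<Rightarrow> real" where
  "det_hess \<alpha> \<xi> = hess \<alpha> \<xi> 1 1 * hess \<alpha> \<xi> 2 2 - hess \<alpha> \<xi> 1 2 * hess \<alpha> \<xi> 2 1"

definition T2 :: "(real \<times> real) set" where
  "T2 = {\<xi>. -pi \<le> fst \<xi> \<and> fst \<xi> \<le> pi \<and> -pi \<le> snd \<xi> \<and> snd \<xi> \<le> pi}"

definition M :: "(real \<times> real) set" where
  "M = T2 - {(0, 0)}"

definition E :: "real \<Rightarrow> (real \<times> real) set" where
  "E \<alpha> = {\<xi> \<in> M. det_hess \<alpha> \<xi> = 0}"

definition K3 :: "(real \<times> real) set" where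
  "K3 = {(a, b). a \<in> {pi/2, -pi/2} \<and> b \<in> {pi/2, -pi/2}}"

definition unit_kernel :: "real \<Rightarrow> real \<times> real \<Rightarrow> real \<times> real \<Rightarrow> bool" where
  "unit_kernel \<alpha> \<xi> k \<longleftrightarrow> norm k = 1 \<and>
     (\<forall>i\<in>{1,2}. (\<Sum>j\<in>{1,2}. hess \<alpha> \<xi> i j * comp k j) = 0)"

definition d3_dir :: "real \<Rightarrow> real \<times> real \<Rightarrow> real \<times> real \<Rightarrow> real" where
  "d3_dir \<alpha> k \<xi> = (\<Sum>i\<in>{1::nat,2}. \<Sum>j\<in>{1::nat,2}. \<Sum>l\<in>{1::nat,2}.
      comp k i * comp k j * comp k l * partial i (partial j (partial l (w \<alpha>))) \<xi>)"

end

(* Write S = 1 - (cos xi1 + cos xi2)/2, so that w = S powr p with p = alpha/2.  The derivatives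
   of S are diagonal: grad S = (a, b) = (sin xi1, sin xi2)/2, D^2 S = diag (c, d) with
   (c, d) = (cos xi1, cos xi2)/2, and D^3 S = -diag (a, b).  Hence
   D^2 w = p S^(p-2) ((p - 1) grad S grad S^T + S D^2 S), and the third derivative along k is an
   explicit cubic in t = grad S . k.

   On K3 we have c = d = 0 and a^2 = b^2 = 1/4: the Hessian is a multiple of grad S grad S^T, so a
   kernel vector has t = 0, which together with a^2 = b^2 makes the cubic vanish.

   Off K3 the equation det D^2 w = 0 forces c, d to be nonzero, and the kernel equations then
   determine k up to scale.  With q = 1 - p, W = a^2/c + b^2/d and R = a^4/c^3 + b^4/d^3 one gets
   S = q W and that the third derivative is a nonzero multiple of W^2 - S (R + 2 W).  The
   substitution X = 1/(2c), Y = 1/(2d) turns the strict inequality W^2 < S (R + 2 W) into the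
   positivity of a symmetric polynomial in X and Y, which is checked by cases on their signs. *)

theory Submission
  imports Defs
begin

definition w_base :: "real \<times> real \<Rightarrow> real" where
  "w_base \<eta> = 1 - (cos (fst \<eta>) + cos (snd \<eta>)) / 2"

definition w_base_d1 :: "real \<times> real \<Rightarrow> real \<times> real \<Rightarrow> real" where
  "w_base_d1 \<eta> e = sin (fst \<eta>) / 2 * fst e + sin (snd \<eta>) / 2 * snd e"

definition w_base_d2 :: "real \<times> real \<Rightarrow> real \<times> real \<Rightarrow> real \<times> real \<Rightarrow> real" where
  "w_base_d2 \<eta> e e' = cos (fst \<eta>) / 2 * fst e * fst e' + cos (snd \<eta>) / 2 * snd e * snd e'"

definition w_base_d3 :: "real \<times> real \<Rightarrow> real \<times> real \<Rightarrow> real \<times> real \<Rightarrow> real \<times> real \<Rightarrow> real" where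
  "w_base_d3 \<eta> e e' e'' =
     - (sin (fst \<eta>) / 2 * fst e * fst e' * fst e'' + sin (snd \<eta>) / 2 * snd e * snd e' * snd e'')"

definition w_base_powr_d1 :: "real \<Rightarrow> real \<times> real \<Rightarrow> real \<times> real \<Rightarrow> real" where
  "w_base_powr_d1 p \<eta> e = p * w_base \<eta> powr (p - 1) * w_base_d1 \<eta> e"

definition w_base_powr_d2 :: "real \<Rightarrow> real \<times> real \<Rightarrow> real \<times> real \<Rightarrow> real \<times> real \<Rightarrow> real" where
  "w_base_powr_d2 p \<eta> e e' = p * w_base \<eta> powr (p - 2) *
     ((p - 1) * w_base_d1 \<eta> e * w_base_d1 \<eta> e' + w_base \<eta> * w_base_d2 \<eta> e e')"

definition w_base_powr_d3 ::
    "real \<Rightarrow> real \<times> real \<Rightarrow> real \<times> real \<Rightarrow> real \<times> real \<Rightarrow> real \<times> real \<Rightarrow> real" where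
  "w_base_powr_d3 p \<eta> e e' e'' = p * w_base \<eta> powr (p - 3) *
     ((p - 1) * (p - 2) * w_base_d1 \<eta> e * w_base_d1 \<eta> e' * w_base_d1 \<eta> e''
      + (p - 1) * w_base \<eta> * (w_base_d2 \<eta> e e' * w_base_d1 \<eta> e''
          + w_base_d2 \<eta> e e'' * w_base_d1 \<eta> e' + w_base_d2 \<eta> e' e'' * w_base_d1 \<eta> e)
      + (w_base \<eta>)\<^sup>2 * w_base_d3 \<eta> e e' e'')"

lemma w_eq_w_base_powr: "w \<alpha> \<eta> = w_base \<eta> powr (\<alpha> / 2)"
proof -
  have half_angle: "(sin (x / 2))\<^sup>2 = (1 - cos x) / 2" for x :: real
    using cos_double_sin[of "x / 2"] by simp
  have "(sin (fst \<eta> / 2))\<^sup>2 + (sin (snd \<eta> / 2))\<^sup>2 = w_base \<eta>"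
    unfolding half_angle w_base_def by (simp add: field_simps)
  then show ?thesis
    unfolding w_def by simp
qed

lemma w_base_line_deriv:
  "((\<lambda>t. w_base (\<eta> + t *\<^sub>R e)) has_real_derivative w_base_d1 \<eta> e) (at 0)"
  unfolding w_base_def w_base_d1_def
  by (auto intro!: derivative_eq_intros simp: field_simps)

lemma w_base_d1_line_deriv:
  "((\<lambda>t. w_base_d1 (\<eta> + t *\<^sub>R e') e) has_real_derivative w_base_d2 \<eta> e e') (at 0)"
  unfolding w_base_d1_def w_base_d2_def
  by (auto intro!: derivative_eq_intros simp: field_simps)

lemma w_base_d2_line_deriv:
  "((\<lambda>t. w_base_d2 (\<eta> + t *\<^sub>R e'') e e') has_real_derivative w_base_d3 \<eta> e e' e'') (at 0)"
  unfolding w_base_d2_def w_base_d3_def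
  by (auto intro!: derivative_eq_intros simp: field_simps)

lemma w_base_powr_line_deriv:
  assumes "w_base \<eta> > 0"
  shows "((\<lambda>t. w_base (\<eta> + t *\<^sub>R e) powr r) has_real_derivative
           r * w_base \<eta> powr (r - 1) * w_base_d1 \<eta> e) (at 0)"
  using DERIV_fun_powr[OF w_base_line_deriv, of \<eta> e r] assms by simp

lemma powr_diff_eq_mult_powr:
  fixes x :: real
  assumes "x > 0"
  shows "x powr (r - 1) = x * x powr (r - 2)" and "x powr (r - 2) = x * x powr (r - 3)"
  using powr_mult_base[of x "r - 2"] powr_mult_base[of x "r - 3"] assms by simp_all

lemma w_base_powr_d1_line_deriv:
  assumes "w_base \<eta> > 0"
  shows "((\<lambda>t. w_base_powr_d1 p (\<eta> + t *\<^sub>R e') e) has_real_derivative w_base_powr_d2 p \<eta> e e') (at 0)"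
  unfolding w_base_powr_d1_def
  by (rule derivative_eq_intros w_base_powr_line_deriv[OF assms] w_base_d1_line_deriv refl)+
     (simp add: w_base_powr_d2_def powr_diff_eq_mult_powr[OF assms] algebra_simps)

lemma w_base_powr_d2_line_deriv:
  assumes "w_base \<eta> > 0"
  shows "((\<lambda>t. w_base_powr_d2 p (\<eta> + t *\<^sub>R e'') e e') has_real_derivative
           w_base_powr_d3 p \<eta> e e' e'') (at 0)"
  unfolding w_base_powr_d2_def
  by (rule derivative_eq_intros w_base_powr_line_deriv[OF assms] w_base_line_deriv
        w_base_d1_line_deriv w_base_d2_line_deriv refl)+
     (simp add: w_base_powr_d3_def powr_diff_eq_mult_powr[OF assms] algebra_simps power2_eq_square)

lemma eventually_w_base_pos_line:
  assumes "w_base \<eta> > 0"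
  shows "\<forall>\<^sub>F t in nhds 0. w_base (\<eta> + t *\<^sub>R e) > 0"
proof -
  have "((\<lambda>t. w_base (\<eta> + t *\<^sub>R e)) \<longlongrightarrow> w_base \<eta>) (nhds 0)"
    using DERIV_isCont[OF w_base_line_deriv] by (simp add: isCont_def tendsto_nhds_iff)
  then show ?thesis
    using assms by (rule order_tendstoD(1))
qed

lemma partial_eq_line_deriv:
  assumes "\<forall>\<^sub>F t in nhds 0. f (\<eta> + t *\<^sub>R coord_dir i) = g (\<eta> + t *\<^sub>R coord_dir i)"
    and "((\<lambda>t. g (\<eta> + t *\<^sub>R coord_dir i)) has_real_derivative D) (at 0)"
  shows "partial i f \<eta> = D"
  unfolding partial_def deriv_cong_ev[OF assms(1) refl] using assms(2) by (rule DERIV_imp_deriv)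

lemma partial_w:
  assumes "w_base \<eta> > 0"
  shows "partial l (w \<alpha>) \<eta> = w_base_powr_d1 (\<alpha> / 2) \<eta> (coord_dir l)"
  using w_base_powr_line_deriv[OF assms, of "coord_dir l" "\<alpha> / 2"]
  by (intro partial_eq_line_deriv[where g = "\<lambda>\<zeta>. w_base \<zeta> powr (\<alpha> / 2)"])
     (simp_all add: w_eq_w_base_powr w_base_powr_d1_def)

lemma partial2_w:
  assumes "w_base \<eta> > 0"
  shows "partial j (partial l (w \<alpha>)) \<eta> = w_base_powr_d2 (\<alpha> / 2) \<eta> (coord_dir l) (coord_dir j)"
  using eventually_w_base_pos_line[OF assms, of "coord_dir j"]
  by (intro partial_eq_line_deriv[OF _ w_base_powr_d1_line_deriv[OF assms]])
     (auto elim!: eventually_mono intro: partial_w)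

lemma partial3_w:
  assumes "w_base \<eta> > 0"
  shows "partial i (partial j (partial l (w \<alpha>))) \<eta> =
           w_base_powr_d3 (\<alpha> / 2) \<eta> (coord_dir l) (coord_dir j) (coord_dir i)"
  using eventually_w_base_pos_line[OF assms, of "coord_dir i"]
  by (intro partial_eq_line_deriv[OF _ w_base_powr_d2_line_deriv[OF assms]])
     (auto elim!: eventually_mono intro: partial2_w)

lemma coord_dir_comp_simps [simp]:
  "coord_dir 1 = (1, 0)" "coord_dir 2 = (0, 1)" "comp k 1 = fst k" "comp k 2 = snd k"
  "coord_dir (Suc 0) = (1, 0)" "comp k (Suc 0) = fst k"
  by (simp_all add: coord_dir_def comp_def)

lemma hess_row_eq:
  assumes "w_base \<xi> > 0"
  shows "(\<Sum>j\<in>{1,2}. hess \<alpha> \<xi> i j * comp k j) = w_base_powr_d2 (\<alpha> / 2) \<xi> k (coord_dir i)"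
  by (simp add: hess_def partial2_w[OF assms] w_base_powr_d2_def w_base_d1_def w_base_d2_def
      algebra_simps; simp add: field_simps)

lemma d3_dir_eq:
  assumes "w_base \<xi> > 0"
  shows "d3_dir \<alpha> k \<xi> = w_base_powr_d3 (\<alpha> / 2) \<xi> k k k"
  by (simp add: d3_dir_def partial3_w[OF assms] w_base_powr_d3_def w_base_d1_def w_base_d2_def
      w_base_d3_def algebra_simps; simp add: field_simps)

lemma w_derivatives_in_coordinates:
  assumes pos: "w_base \<xi> > 0"
    and "p = \<alpha> / 2" "S = w_base \<xi>" "a = sin (fst \<xi>) / 2" "b = sin (snd \<xi>) / 2"
    and "c = cos (fst \<xi>) / 2" "d = cos (snd \<xi>) / 2" "t = a * fst k + b * snd k"
  shows "(\<Sum>j\<in>{1,2}. hess \<alpha> \<xi> 1 j * comp k j) = p * S powr (p - 2) * ((p - 1) * t * a + S * c * fst k)"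
    and "(\<Sum>j\<in>{1,2}. hess \<alpha> \<xi> 2 j * comp k j) = p * S powr (p - 2) * ((p - 1) * t * b + S * d * snd k)"
    and "det_hess \<alpha> \<xi> = (p * S powr (p - 2))\<^sup>2 * S * (S * c * d + (p - 1) * (a\<^sup>2 * d + b\<^sup>2 * c))"
    and "d3_dir \<alpha> k \<xi> = p * S powr (p - 3) *
           ((p - 1) * (p - 2) * t ^ 3 + 3 * (p - 1) * S * t * (c * (fst k)\<^sup>2 + d * (snd k)\<^sup>2)
            - S\<^sup>2 * (a * (fst k) ^ 3 + b * (snd k) ^ 3))"
proof -
  note defs = w_base_powr_d2_def w_base_powr_d3_def w_base_d1_def w_base_d2_def w_base_d3_def
    assms(2-7)[symmetric] assms(8)
  show "(\<Sum>j\<in>{1,2}. hess \<alpha> \<xi> 1 j * comp k j) = p * S powr (p - 2) * ((p - 1) * t * a + S * c * fst k)"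
    unfolding hess_row_eq[OF pos] defs by (simp add: algebra_simps)
  show "(\<Sum>j\<in>{1,2}. hess \<alpha> \<xi> 2 j * comp k j) = p * S powr (p - 2) * ((p - 1) * t * b + S * d * snd k)"
    unfolding hess_row_eq[OF pos] defs by (simp add: algebra_simps)
  show "det_hess \<alpha> \<xi> = (p * S powr (p - 2))\<^sup>2 * S * (S * c * d + (p - 1) * (a\<^sup>2 * d + b\<^sup>2 * c))"
    unfolding det_hess_def hess_def partial2_w[OF pos] defs
    by (simp add: algebra_simps power2_eq_square)
  show "d3_dir \<alpha> k \<xi> = p * S powr (p - 3) *
           ((p - 1) * (p - 2) * t ^ 3 + 3 * (p - 1) * S * t * (c * (fst k)\<^sup>2 + d * (snd k)\<^sup>2)
            - S\<^sup>2 * (a * (fst k) ^ 3 + b * (snd k) ^ 3))"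
    unfolding d3_dir_eq[OF pos] defs by (simp add: algebra_simps power2_eq_square power3_eq_cube)
qed

lemma cos_eq_1_imp_eq_0:
  fixes x :: real
  assumes "cos x = 1" "-pi \<le> x" "x \<le> pi"
  shows "x = 0"
proof -
  have "sin x = 0"
    using assms(1) sin_cos_squared_add[of x] by simp
  moreover have "x \<noteq> pi" "x \<noteq> -pi"
    using assms(1) by auto
  ultimately show ?thesis
    using sin_eq_0_pi assms(2,3) by force
qed

lemma cos_eq_0_iff_pm_pi_half:
  fixes x :: real
  assumes "-pi \<le> x" "x \<le> pi"
  shows "cos x = 0 \<longleftrightarrow> x = pi/2 \<or> x = -pi/2"
proof
  assume "cos x = 0"
  then obtain n :: int where n: "x = n * pi + pi/2"
    using cos_zero_iff_int2 by blast
  have "(-3/2) * pi \<le> n * pi" "n * pi \<le> (1/2) * pi"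
    using assms unfolding n by linarith+
  then have "-3/2 \<le> real_of_int n" "real_of_int n \<le> 1/2"
    using mult_le_cancel_right_pos[OF pi_gt_zero, of "-3/2" n]
      mult_le_cancel_right_pos[OF pi_gt_zero, of n "1/2"] by simp_all
  then have "n = -1 \<or> n = 0"
    by linarith
  then show "x = pi/2 \<or> x = -pi/2"
    using n by auto
next
  show "x = pi/2 \<or> x = -pi/2 \<Longrightarrow> cos x = 0"
    by (elim disjE; hypsubst) simp_all
qed

lemma w_base_pos:
  assumes "\<xi> \<in> M"
  shows "w_base \<xi> > 0"
proof (rule ccontr)
  assume "\<not> w_base \<xi> > 0"
  then have "cos (fst \<xi>) = 1" "cos (snd \<xi>) = 1"
    unfolding w_base_def using cos_le_one[of "fst \<xi>"] cos_le_one[of "snd \<xi>"] by argo+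
  then have "fst \<xi> = 0" "snd \<xi> = 0"
    using assms cos_eq_1_imp_eq_0 unfolding M_def T2_def by auto
  then show False
    using assms unfolding M_def by (cases \<xi>) simp
qed

lemma mem_K3_iff:
  "\<xi> \<in> K3 \<longleftrightarrow> (fst \<xi> = pi/2 \<or> fst \<xi> = -pi/2) \<and> (snd \<xi> = pi/2 \<or> snd \<xi> = -pi/2)"
  unfolding K3_def by (cases \<xi>) simp

lemma mem_K3_iff_cos_eq_0:
  assumes "\<xi> \<in> T2"
  shows "\<xi> \<in> K3 \<longleftrightarrow> cos (fst \<xi>) = 0 \<and> cos (snd \<xi>) = 0"
  using assms cos_eq_0_iff_pm_pi_half unfolding mem_K3_iff T2_def by auto

lemma K3_subset_M: "K3 \<subseteq> M"
proof
  fix \<xi> assume "\<xi> \<in> K3"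
  have bounds: "-pi \<le> x \<and> x \<le> pi \<and> x \<noteq> 0" if "x = pi/2 \<or> x = -pi/2" for x :: real
    using that pi_gt_zero by (elim disjE; hypsubst) linarith+
  show "\<xi> \<in> M"
    using bounds[of "fst \<xi>"] bounds[of "snd \<xi>"] \<open>\<xi> \<in> K3\<close>
    unfolding mem_K3_iff M_def T2_def by (cases \<xi>) auto
qed

lemma cos_eq_0_on_K3:
  assumes "P \<in> K3"
  shows "cos (fst P) = 0" "cos (snd P) = 0"
  using assms K3_subset_M mem_K3_iff_cos_eq_0[of P] unfolding M_def by auto

lemma nondegeneracy_poly_pos:
  fixes X Y :: real
  defines "s \<equiv> X + Y" and "P \<equiv> X * Y"
  assumes X: "\<bar>X\<bar> \<ge> 1" and Y: "\<bar>Y\<bar> \<ge> 1" and pos: "s * (P - 1) / P > 0"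
  shows "s * P * (2 * P * s\<^sup>2 + 2 * (P + 1) * s - s ^ 3 - 6 * P\<^sup>2 - 2) > 0"
proof -
  have "\<bar>P\<bar> \<ge> 1"
    unfolding P_def abs_mult using X Y mult_mono[OF X Y] by simp
  then consider (opposite_signs) "P \<le> -1" | (equal_signs) "P \<ge> 1"
    by linarith
  then show ?thesis
  proof cases
    case opposite_signs
    have "(P - 1) / P > 0"
      using opposite_signs by (simp add: zero_less_divide_iff)
    moreover have "s * ((P - 1) / P) > 0"
      using pos by simp
    ultimately have "s > 0"
      by (metis zero_less_mult_pos2)
    moreover have "2 * P * s\<^sup>2 + 2 * (P + 1) * s - s ^ 3 - 6 * P\<^sup>2 - 2 < 0"
    proof -
      have "2 * P * s\<^sup>2 \<le> 0" "2 * (P + 1) * s \<le> 0" "s ^ 3 > 0"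
        using opposite_signs \<open>s > 0\<close> by (simp_all add: mult_nonpos_nonneg mult_nonneg_nonpos)
      then show ?thesis by (smt (verit) zero_le_power2)
    qed
    ultimately show ?thesis
      using opposite_signs by (simp add: mult_pos_neg mult_neg_neg)
  next
    case equal_signs
    have "X \<ge> 1 \<and> Y \<ge> 1"
    proof (rule ccontr)
      assume "\<not> (X \<ge> 1 \<and> Y \<ge> 1)"
      then have "X \<le> -1" "Y \<le> -1"
        using X Y equal_signs unfolding P_def by (smt (verit) mult_nonneg_nonpos mult_nonpos_nonneg)+
      then show False
        using pos equal_signs unfolding s_def by (simp add: zero_less_mult_iff zero_less_divide_iff)
    qed
    define m n where "m = X - 1" and "n = Y - 1"
    have mn: "m \<ge> 0" "n \<ge> 0"
      using \<open>X \<ge> 1 \<and> Y \<ge> 1\<close> unfolding m_def n_def by simp_all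
    have "m + n > 0"
    proof (rule ccontr)
      assume "\<not> m + n > 0"
      then have "X = 1" "Y = 1"
        using mn unfolding m_def n_def by linarith+
      then show False
        using pos unfolding s_def P_def by simp
    qed
    have "2 * P * s\<^sup>2 + 2 * (P + 1) * s - s ^ 3 - 6 * P\<^sup>2 - 2
        = (m + n) * (m\<^sup>2 + n\<^sup>2) + 2 * m * n * ((m - n)\<^sup>2 + m * n)"
      unfolding s_def P_def m_def n_def by algebra
    also have "\<dots> > 0"
    proof (rule add_pos_nonneg)
      have "m\<^sup>2 + n\<^sup>2 > 0"
        using \<open>m + n > 0\<close> by (auto simp: sum_power2_gt_zero_iff)
      then show "(m + n) * (m\<^sup>2 + n\<^sup>2) > 0"
        using \<open>m + n > 0\<close> by simp
      show "2 * m * n * ((m - n)\<^sup>2 + m * n) \<ge> 0"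
        using mn by simp
    qed
    finally show ?thesis
      using equal_signs \<open>X \<ge> 1 \<and> Y \<ge> 1\<close> unfolding s_def by simp
  qed
qed

lemma nondegeneracy_inequality:
  fixes c d :: real
  defines "W \<equiv> (1/4 - c\<^sup>2) / c + (1/4 - d\<^sup>2) / d"
    and "R \<equiv> (1/4 - c\<^sup>2)\<^sup>2 / c ^ 3 + (1/4 - d\<^sup>2)\<^sup>2 / d ^ 3"
  assumes c: "c \<noteq> 0" "\<bar>c\<bar> \<le> 1/2" and d: "d \<noteq> 0" "\<bar>d\<bar> \<le> 1/2" and "W > 0"
  shows "W\<^sup>2 < (1 - c - d) * (R + 2 * W)"
proof -
  define X Y where "X = 1 / (2 * c)" and "Y = 1 / (2 * d)"
  define s P where "s = X + Y" and "P = X * Y"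
  have X: "X \<noteq> 0" "\<bar>X\<bar> \<ge> 1"
    using c unfolding X_def by (auto simp: abs_divide le_divide_eq)
  have Y: "Y \<noteq> 0" "\<bar>Y\<bar> \<ge> 1"
    using d unfolding Y_def by (auto simp: abs_divide le_divide_eq)
  have cd: "c = 1 / (2 * X)" "d = 1 / (2 * Y)"
    unfolding X_def Y_def using c d by simp_all
  have W_eq: "W = s * (P - 1) / (2 * P)"
    unfolding W_def cd s_def P_def using X Y by (simp add: field_simps power2_eq_square)
  have "(1 - c - d) * (R + 2 * W) - W\<^sup>2
      = s * P * (2 * P * s\<^sup>2 + 2 * (P + 1) * s - s ^ 3 - 6 * P\<^sup>2 - 2) / (4 * P\<^sup>2)"
    unfolding W_def R_def cd s_def P_def using X Y
    by (simp add: field_simps power2_eq_square power3_eq_cube)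
  moreover have "s * P * (2 * P * s\<^sup>2 + 2 * (P + 1) * s - s ^ 3 - 6 * P\<^sup>2 - 2) > 0"
    using nondegeneracy_poly_pos[OF X(2) Y(2)] \<open>W > 0\<close> unfolding W_eq s_def P_def
    by (simp add: zero_less_divide_iff zero_less_mult_iff)
  moreover have "4 * P\<^sup>2 > 0"
    using X Y unfolding P_def by simp
  ultimately have "(1 - c - d) * (R + 2 * W) - W\<^sup>2 > 0"
    by simp
  then show ?thesis
    by simp
qed

lemma kernel_cubic_ne_0:
  fixes p S a b c d k1 k2 :: real
  defines "t \<equiv> a * k1 + b * k2"
  assumes p: "p < 1" and S: "S = 1 - c - d" "S > 0"
    and ac: "a\<^sup>2 + c\<^sup>2 = 1/4" and bd: "b\<^sup>2 + d\<^sup>2 = 1/4"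
    and cd: "c \<noteq> 0 \<or> d \<noteq> 0" and k: "k1 \<noteq> 0 \<or> k2 \<noteq> 0"
    and ker1: "(p - 1) * t * a + S * c * k1 = 0" and ker2: "(p - 1) * t * b + S * d * k2 = 0"
    and det: "S * c * d + (p - 1) * (a\<^sup>2 * d + b\<^sup>2 * c) = 0"
  shows "(p - 1) * (p - 2) * t ^ 3 + 3 * (p - 1) * S * t * (c * k1\<^sup>2 + d * k2\<^sup>2)
           - S\<^sup>2 * (a * k1 ^ 3 + b * k2 ^ 3) \<noteq> 0"
proof -
  define q where "q = 1 - p"
  have q: "0 < q"
    using p unfolding q_def by simp
  have c0: "c \<noteq> 0"
  proof
    assume "c = 0"
    then have "a\<^sup>2 = 1/4" "d \<noteq> 0"
      using ac cd by simp_all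
    then show False
      using det \<open>c = 0\<close> p by simp
  qed
  have d0: "d \<noteq> 0"
  proof
    assume "d = 0"
    then have "b\<^sup>2 = 1/4" "c \<noteq> 0"
      using bd cd by simp_all
    then show False
      using det \<open>d = 0\<close> p by simp
  qed
  have ck1: "c * k1 = q * t * a / S" and dk2: "d * k2 = q * t * b / S"
    using ker1 ker2 S(2) unfolding q_def by (simp_all add: field_simps)
  then have k1: "k1 = q * t * a / (S * c)" and k2: "k2 = q * t * b / (S * d)"
    using c0 d0 S(2) by (simp_all add: field_simps)
  have "t \<noteq> 0"
    using k k1 k2 by auto
  define W R where "W = a\<^sup>2 / c + b\<^sup>2 / d" and "R = (a\<^sup>2)\<^sup>2 / c ^ 3 + (b\<^sup>2)\<^sup>2 / d ^ 3"
  have SW: "S = q * W"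
    using det c0 d0 unfolding W_def q_def by (simp add: field_simps)
  then have "W > 0"
    using S(2) q by (simp add: zero_less_mult_iff)
  have "W\<^sup>2 < S * (R + 2 * W)"
  proof -
    have "c\<^sup>2 \<le> 1/4" "d\<^sup>2 \<le> 1/4"
      using ac bd zero_le_power2[of a] zero_le_power2[of b] by linarith+
    then have "\<bar>c\<bar> \<le> 1/2" "\<bar>d\<bar> \<le> 1/2"
      using abs_le_square_iff[of c "1/2"] abs_le_square_iff[of d "1/2"]
      by (simp_all add: power_divide)
    moreover have "a\<^sup>2 = 1/4 - c\<^sup>2" "b\<^sup>2 = 1/4 - d\<^sup>2"
      using ac bd by simp_all
    ultimately show ?thesis
      using nondegeneracy_inequality[of c d] c0 d0 \<open>W > 0\<close> S(1) unfolding W_def R_def by simp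
  qed
  have quadratic: "c * k1\<^sup>2 + d * k2\<^sup>2 = q * t\<^sup>2 / S"
  proof -
    have "c * k1\<^sup>2 + d * k2\<^sup>2 = (c * k1) * k1 + (d * k2) * k2"
      by (simp add: power2_eq_square)
    also have "\<dots> = q * t * (a * k1 + b * k2) / S"
      unfolding ck1 dk2 by (simp add: algebra_simps add_divide_distrib)
    finally show ?thesis
      unfolding t_def by (simp add: power2_eq_square)
  qed
  have cubic: "a * k1 ^ 3 + b * k2 ^ 3 = q ^ 3 * t ^ 3 * R / S ^ 3"
    unfolding R_def using S(2) c0 d0
    by (simp add: k1 k2 field_simps power2_eq_square power3_eq_cube)
  have "(p - 1) * (p - 2) * t ^ 3 + 3 * (p - 1) * S * t * (c * k1\<^sup>2 + d * k2\<^sup>2)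
          - S\<^sup>2 * (a * k1 ^ 3 + b * k2 ^ 3)
        = q * t ^ 3 * (1 - 2 * q - q\<^sup>2 * R / S)"
    unfolding quadratic cubic using S(2) unfolding q_def
    by (simp add: field_simps power2_eq_square power3_eq_cube)
  also have "\<dots> = q * t ^ 3 * (W\<^sup>2 - S * (R + 2 * W)) / W\<^sup>2"
    using \<open>W > 0\<close> q unfolding SW by (simp add: field_simps power2_eq_square)
  finally show ?thesis
    using \<open>W\<^sup>2 < S * (R + 2 * W)\<close> \<open>t \<noteq> 0\<close> \<open>W > 0\<close> q by simp
qed

lemma d3_dir_ne_0_off_K3:
  assumes \<alpha>: "0 < \<alpha>" "\<alpha> < 2" and \<xi>: "\<xi> \<in> E \<alpha> - K3" and k: "unit_kernel \<alpha> \<xi> k"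
  shows "d3_dir \<alpha> k \<xi> \<noteq> 0"
proof -
  have pos: "w_base \<xi> > 0" and det0: "det_hess \<alpha> \<xi> = 0"
    using \<xi> w_base_pos unfolding E_def by auto
  have not_K3: "\<not> (cos (fst \<xi>) = 0 \<and> cos (snd \<xi>) = 0)"
    using \<xi> mem_K3_iff_cos_eq_0[of \<xi>] unfolding E_def M_def by blast
  define p S a b c d t where "p = \<alpha> / 2" and "S = w_base \<xi>"
    and "a = sin (fst \<xi>) / 2" and "b = sin (snd \<xi>) / 2"
    and "c = cos (fst \<xi>) / 2" and "d = cos (snd \<xi>) / 2" and "t = a * fst k + b * snd k"
  note coords = w_derivatives_in_coordinates[OF pos p_def S_def a_def b_def c_def d_def t_def]
  have "0 < p" and p: "p < 1" and "S > 0"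
    using \<alpha> pos unfolding p_def S_def by simp_all
  then have "p * S powr (p - 2) \<noteq> 0" "p * S powr (p - 3) \<noteq> 0"
    by simp_all
  have "(p - 1) * t * a + S * c * fst k = 0" "(p - 1) * t * b + S * d * snd k = 0"
    using k coords(1,2) \<open>p * S powr (p - 2) \<noteq> 0\<close> unfolding unit_kernel_def by simp_all
  moreover have "S * c * d + (p - 1) * (a\<^sup>2 * d + b\<^sup>2 * c) = 0"
    using det0 coords(3) \<open>p * S powr (p - 2) \<noteq> 0\<close> \<open>S > 0\<close> by simp
  moreover have "S = 1 - c - d"
    unfolding S_def c_def d_def w_base_def by (simp add: field_simps)
  moreover have "a\<^sup>2 + c\<^sup>2 = 1/4" "b\<^sup>2 + d\<^sup>2 = 1/4"
    unfolding a_def b_def c_def d_def power_divide by (simp_all add: add_divide_distrib[symmetric])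
  moreover have "c \<noteq> 0 \<or> d \<noteq> 0"
    using not_K3 unfolding c_def d_def by simp
  moreover have "fst k \<noteq> 0 \<or> snd k \<noteq> 0"
    using k unfolding unit_kernel_def by (cases k) auto
  ultimately have "(p - 1) * (p - 2) * t ^ 3 + 3 * (p - 1) * S * t * (c * (fst k)\<^sup>2 + d * (snd k)\<^sup>2)
      - S\<^sup>2 * (a * fst k ^ 3 + b * snd k ^ 3) \<noteq> 0"
    using kernel_cubic_ne_0[OF p, of S c d a b "fst k" "snd k"] \<open>S > 0\<close> unfolding t_def by blast
  then show ?thesis
    unfolding coords(4) using \<open>p * S powr (p - 3) \<noteq> 0\<close> by simp
qed

lemma K3_subset_E: "K3 \<subseteq> E \<alpha>"
proof
  fix P assume P: "P \<in> K3"
  then have "P \<in> M"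
    using K3_subset_M by blast
  then have pos: "w_base P > 0"
    by (rule w_base_pos)
  have "det_hess \<alpha> P = 0"
    unfolding w_derivatives_in_coordinates(3)[OF pos refl refl refl refl refl refl refl]
    using cos_eq_0_on_K3[OF P] by simp
  then show "P \<in> E \<alpha>"
    using \<open>P \<in> M\<close> unfolding E_def by simp
qed

lemma d3_dir_eq_0_on_K3:
  assumes \<alpha>: "\<alpha> \<noteq> 2" and P: "P \<in> K3" and k: "unit_kernel \<alpha> P k"
  shows "d3_dir \<alpha> k P = 0"
proof -
  have pos: "w_base P > 0"
    using P K3_subset_M w_base_pos by blast
  define p S a b c d t where "p = \<alpha> / 2" and "S = w_base P"
    and "a = sin (fst P) / 2" and "b = sin (snd P) / 2"
    and "c = cos (fst P) / 2" and "d = cos (snd P) / 2" and "t = a * fst k + b * snd k"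
  note coords = w_derivatives_in_coordinates[OF pos p_def S_def a_def b_def c_def d_def t_def]
  have "c = 0"
    using cos_eq_0_on_K3[OF P] unfolding c_def by simp
  have "a\<^sup>2 = 1/4" "b\<^sup>2 = 1/4"
    using cos_eq_0_on_K3[OF P] sin_cos_squared_add[of "fst P"] sin_cos_squared_add[of "snd P"]
    unfolding a_def b_def by (simp_all add: power_divide)
  show ?thesis
  proof (cases "p = 0")
    case True
    then show ?thesis
      unfolding coords(4) by simp
  next
    case False
    then have "p * S powr (p - 2) \<noteq> 0"
      using pos unfolding S_def by simp
    then have "(p - 1) * t * a = 0"
      using k coords(1) \<open>c = 0\<close> unfolding unit_kernel_def by simp
    moreover have "p \<noteq> 1" "a \<noteq> 0"
      using \<alpha> \<open>a\<^sup>2 = 1/4\<close> unfolding p_def by auto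
    ultimately have "t = 0"
      by simp
    have "a * fst k ^ 3 + b * snd k ^ 3 = 4 * a\<^sup>2 * (a * fst k ^ 3) + 4 * b\<^sup>2 * (b * snd k ^ 3)"
      by (simp add: \<open>a\<^sup>2 = 1/4\<close> \<open>b\<^sup>2 = 1/4\<close>)
    also have "\<dots> = 4 * t * ((a * fst k)\<^sup>2 - a * fst k * b * snd k + (b * snd k)\<^sup>2)"
      unfolding t_def by algebra
    finally show ?thesis
      unfolding coords(4) \<open>t = 0\<close> by simp
  qed
qed

theorem lemma5p4:
  fixes \<alpha> :: real
  assumes "1 < \<alpha>" and "\<alpha> < 2"
  shows "(\<forall>\<xi> \<in> E \<alpha> - K3. \<forall>k. unit_kernel \<alpha> \<xi> k \<longrightarrow> d3_dir \<alpha> k \<xi> \<noteq> 0)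
       \<and> (\<forall>P \<in> K3. P \<in> E \<alpha> \<and> (\<forall>k. unit_kernel \<alpha> P k \<longrightarrow> d3_dir \<alpha> k P = 0))"
proof -
  have "0 < \<alpha>" "\<alpha> \<noteq> 2"
    using assms by simp_all
  then show ?thesis
    using d3_dir_ne_0_off_K3[of \<alpha>] d3_dir_eq_0_on_K3[of \<alpha>] K3_subset_E[of \<alpha>] assms(2) by blast
qed

end
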